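(* Let $P$ be the non-symmetric operad of sets in which $P(n)$ is the set of all $n$-tuples $(f_1,\dots,f_n)$ of order-preserving continuous maps $f_i:[0,1)\to[0,1)$ such that whenever $i<j$ and $t_i,t_j\in[0,1)$ we have $f_i(t_i)<f_j(t_j)$; the identity is $\mathrm{id}_{[0,1)}\in P(1)$, and composition is $(f_1,\dots,f_n)\circ((f_1^1,\dots,f_1^{k_1}),\dots,(f_n^1,\dots,f_n^{k_n}))=(f_1f_1^1,\dots,f_1f_1^{k_1},\dots,f_nf_n^1,\dots,f_nf_n^{k_n})$. Then $P$ is not isomorphic (as an operad) to its reverse $\overline{P}$.
   Context: For a non-symmetric operad of sets $Q$ with composition $\theta\circ(\theta_1,\dots,\theta_n)$, its reverse $\overline{Q}$ has $\overline{Q}(n)=Q(n)$, the same identity, and composition $\theta\circ_{\mathrm{rev}}(\theta_1,\dots,\theta_n)=\theta\circ(\theta_n,\dots,\theta_1)$. An isomorphism of operads is a family of bijections $Q(n)\to Q'(n)$ preserving identity and composition. *)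

theory Defs
  imports Complex_Main
begin

text \<open>Maps [0,1) -> [0,1) are represented as functions real => real that are
  normalised to 0 outside [0,1), so that equality of maps is equality of functions.\<close>

definition I01 :: "real set" where "I01 = {0..<1}"

definition OPC :: "(real \<Rightarrow> real) set" where
  "OPC = {f. continuous_on I01 f \<and> mono_on I01 f \<and> f ` I01 \<subseteq> I01
             \<and> (\<forall>t. t \<notin> I01 \<longrightarrow> f t = 0)}"

definition Pop :: "nat \<Rightarrow> (real \<Rightarrow> real) list set" where
  "Pop n = {fs. length fs = n \<and> (\<forall>i<n. fs ! i \<in> OPC) \<and>
     (\<forall>i j t s. i < j \<and> j < n \<and> t \<in> I01 \<and> s \<in> I01 \<longrightarrow> (fs ! i) t < (fs ! j) s)}"

definition idI :: "real \<Rightarrow> real" where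
  "idI = (\<lambda>t. if t \<in> I01 then t else 0)"

definition cmpI :: "(real \<Rightarrow> real) \<Rightarrow> (real \<Rightarrow> real) \<Rightarrow> real \<Rightarrow> real" where
  "cmpI f g = (\<lambda>t. if t \<in> I01 then f (g t) else 0)"

definition opcomp :: "(real \<Rightarrow> real) list \<Rightarrow> (real \<Rightarrow> real) list list \<Rightarrow> (real \<Rightarrow> real) list" where
  "opcomp th ths = concat (map2 (\<lambda>f gs. map (cmpI f) gs) th ths)"

definition iso_to_reverse :: "(nat \<Rightarrow> (real \<Rightarrow> real) list \<Rightarrow> (real \<Rightarrow> real) list) \<Rightarrow> bool" where
  "iso_to_reverse \<phi> \<longleftrightarrow>
     (\<forall>n. bij_betw (\<phi> n) (Pop n) (Pop n)) \<and>
     \<phi> 1 [idI] = [idI] \<and>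
     (\<forall>th ths. th \<in> Pop (length th) \<and> length ths = length th \<and>
        (\<forall>g \<in> set ths. g \<in> Pop (length g)) \<longrightarrow>
        \<phi> (sum_list (map length ths)) (opcomp th ths) =
        opcomp (\<phi> (length th) th) (rev (map (\<lambda>g. \<phi> (length g) g) ths)))"

end

theory Submission
  imports Defs
begin

text \<open>The constant map 0 is a left zero of composition in \<open>P(1)\<close>, so an isomorphism
  \<open>\<phi> : P \<rightarrow> reverse(P)\<close>, which is a monoid automorphism in arity one, must send some
  constant map \<open>c\<close> to it. For \<open>c < d\<close> the pair of constant maps \<open>(c, d)\<close> lies in \<open>P(2)\<close>;
  inserting the identity into its first slot shows that \<open>\<phi>\<close> moves the image of its
  first component to the last slot. But the last component of an element of \<open>P(2)\<close>
  takes a positive value at 0, so it is never the constant map 0.\<close>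

definition constI :: "real \<Rightarrow> real \<Rightarrow> real" where
  "constI c = (\<lambda>t. if t \<in> I01 then c else 0)"

lemma zero_in_I01 [simp]: "0 \<in> I01"
  by (simp add: I01_def)

lemma OPC_value_in_I01: "f \<in> OPC \<Longrightarrow> t \<in> I01 \<Longrightarrow> f t \<in> I01"
  by (auto simp: OPC_def)

lemma OPC_nonneg: "f \<in> OPC \<Longrightarrow> t \<in> I01 \<Longrightarrow> 0 \<le> f t"
  using OPC_value_in_I01 by (auto simp: I01_def)

lemma constI_OPC: "c \<in> I01 \<Longrightarrow> constI c \<in> OPC"
proof -
  assume "c \<in> I01"
  moreover have "continuous_on I01 (constI c)"
    by (rule continuous_on_cong[THEN iffD2, OF refl, of _ _ "\<lambda>_. c"]) (auto simp: constI_def)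
  ultimately show ?thesis
    by (auto simp: OPC_def constI_def mono_on_def)
qed

lemma idI_OPC: "idI \<in> OPC"
proof -
  have "continuous_on I01 idI"
    by (rule continuous_on_cong[THEN iffD2, OF refl, of _ _ "\<lambda>t. t"]) (auto simp: idI_def)
  then show ?thesis
    by (auto simp: OPC_def idI_def mono_on_def)
qed

lemma cmpI_idI_right: "f \<in> OPC \<Longrightarrow> cmpI f idI = f"
  by (auto simp: cmpI_def idI_def OPC_def)

lemma cmpI_constI_zero_left: "cmpI (constI 0) g = constI 0"
  by (auto simp: cmpI_def constI_def)

lemma cmpI_constI_right: "cmpI f (constI c) = constI (f c)"
  by (auto simp: cmpI_def constI_def)

lemma Pop_0: "Pop 0 = {[]}"
  by (auto simp: Pop_def)

lemma Pop_1: "[f] \<in> Pop 1 \<longleftrightarrow> f \<in> OPC"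
  by (simp add: Pop_def)

lemma Pop_1_cases: "fs \<in> Pop 1 \<Longrightarrow> \<exists>f. fs = [f] \<and> f \<in> OPC"
  by (auto simp: Pop_def length_Suc_conv)

lemma Pop_2: "[f, g] \<in> Pop 2 \<longleftrightarrow> f \<in> OPC \<and> g \<in> OPC \<and> (\<forall>t\<in>I01. \<forall>s\<in>I01. f t < g s)"
proof
  assume "[f, g] \<in> Pop 2"
  then have OPC: "\<forall>i<2. [f, g] ! i \<in> OPC"
    and less: "\<forall>i j t s. i < j \<and> j < 2 \<and> t \<in> I01 \<and> s \<in> I01 \<longrightarrow> ([f, g] ! i) t < ([f, g] ! j) s"
    unfolding Pop_def by blast+
  show "f \<in> OPC \<and> g \<in> OPC \<and> (\<forall>t\<in>I01. \<forall>s\<in>I01. f t < g s)"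
    using OPC[rule_format, of 0] OPC[rule_format, of 1] less[rule_format, of 0 1] by simp
next
  assume "f \<in> OPC \<and> g \<in> OPC \<and> (\<forall>t\<in>I01. \<forall>s\<in>I01. f t < g s)"
  then show "[f, g] \<in> Pop 2"
    unfolding Pop_def by (auto simp: less_2_cases_iff)
qed

lemma Pop_2_cases: "fs \<in> Pop 2 \<Longrightarrow> \<exists>f g. fs = [f, g] \<and> [f, g] \<in> Pop 2"
proof -
  assume "fs \<in> Pop 2"
  moreover from this have "length fs = 2"
    by (simp add: Pop_def)
  then have "\<exists>f g. fs = [f, g]"
    by (auto simp: numeral_2_eq_2 length_Suc_conv)
  ultimately show ?thesis
    by blast
qed

lemma Pop_2_last_pos:
  assumes "[f, g] \<in> Pop 2"
  shows "0 < g 0"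
proof -
  have "f \<in> OPC" "f 0 < g 0"
    using assms by (simp_all add: Pop_2)
  then show ?thesis
    using OPC_nonneg[of f 0] by simp
qed

lemma constI_pair_Pop_2: "c \<in> I01 \<Longrightarrow> d \<in> I01 \<Longrightarrow> c < d \<Longrightarrow> [constI c, constI d] \<in> Pop 2"
  by (simp add: Pop_2 constI_OPC) (simp add: constI_def)

definition iso_unary :: "(nat \<Rightarrow> (real \<Rightarrow> real) list \<Rightarrow> (real \<Rightarrow> real) list) \<Rightarrow> (real \<Rightarrow> real) \<Rightarrow> real \<Rightarrow> real" where
  "iso_unary \<phi> f = hd (\<phi> 1 [f])"

context
  fixes \<phi> :: "nat \<Rightarrow> (real \<Rightarrow> real) list \<Rightarrow> (real \<Rightarrow> real) list"
  assumes iso: "iso_to_reverse \<phi>"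
begin

lemma iso_bij: "bij_betw (\<phi> n) (Pop n) (Pop n)"
  using iso by (simp add: iso_to_reverse_def)

lemma iso_Pop: "fs \<in> Pop n \<Longrightarrow> \<phi> n fs \<in> Pop n"
  using iso_bij bij_betwE by blast

lemma iso_comp:
  assumes "th \<in> Pop (length th)" "length ths = length th" "\<forall>g \<in> set ths. g \<in> Pop (length g)"
  shows "\<phi> (sum_list (map length ths)) (opcomp th ths) =
         opcomp (\<phi> (length th) th) (rev (map (\<lambda>g. \<phi> (length g) g) ths))"
  using iso assms by (simp add: iso_to_reverse_def)

lemma iso_arity_0: "\<phi> 0 [] = []"
  using iso_Pop[of "[]" 0] by (simp add: Pop_0)

lemma iso_arity_1: "f \<in> OPC \<Longrightarrow> \<phi> 1 [f] = [iso_unary \<phi> f]"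
proof -
  assume "f \<in> OPC"
  then obtain g where "\<phi> 1 [f] = [g]"
    using Pop_1_cases iso_Pop Pop_1 by blast
  then show ?thesis
    by (simp add: iso_unary_def)
qed

lemma iso_unary_surj: "g \<in> OPC \<Longrightarrow> \<exists>f\<in>OPC. iso_unary \<phi> f = g"
proof -
  assume "g \<in> OPC"
  then have "[g] \<in> \<phi> 1 ` Pop 1"
    using iso_bij[of 1] Pop_1[of g] unfolding bij_betw_def by blast
  then obtain fs where "fs \<in> Pop 1" "\<phi> 1 fs = [g]"
    by (metis imageE)
  moreover from \<open>fs \<in> Pop 1\<close> obtain f where "fs = [f]" "f \<in> OPC"
    using Pop_1_cases by blast
  ultimately have "iso_unary \<phi> f = g"
    by (simp add: iso_unary_def)
  with \<open>f \<in> OPC\<close> show ?thesis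
    by blast
qed

lemma iso_unary_cmpI:
  assumes "f \<in> OPC" "g \<in> OPC"
  shows "iso_unary \<phi> (cmpI f g) = cmpI (iso_unary \<phi> f) (iso_unary \<phi> g)"
proof -
  have "\<phi> 1 (opcomp [f] [[g]]) = opcomp (\<phi> 1 [f]) [\<phi> 1 [g]]"
    using assms iso_comp[of "[f]" "[[g]]"] by (simp add: Pop_def)
  then have "\<phi> 1 [cmpI f g] = [cmpI (iso_unary \<phi> f) (iso_unary \<phi> g)]"
    using assms iso_arity_1 by (simp add: opcomp_def)
  then show ?thesis
    by (simp add: iso_unary_def)
qed

lemma iso_unary_constI_zero: "\<exists>c\<in>I01. iso_unary \<phi> (constI c) = constI 0"
proof -
  obtain b where b: "b \<in> OPC" "iso_unary \<phi> b = constI 0"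
    using iso_unary_surj constI_OPC[of 0] by auto
  have "iso_unary \<phi> (constI (b 0)) = iso_unary \<phi> (cmpI b (constI 0))"
    by (simp add: cmpI_constI_right)
  also have "\<dots> = constI 0"
    using b constI_OPC[of 0] by (simp add: iso_unary_cmpI cmpI_constI_zero_left)
  finally show ?thesis
    using b OPC_value_in_I01 by auto
qed

text \<open>Composing with \<open>([id], [])\<close> extracts the first component; after reversal it
  extracts the last one.\<close>
lemma iso_arity_2_swaps:
  assumes "[f, g] \<in> Pop 2" "\<phi> 2 [f, g] = [f', g']"
  shows "iso_unary \<phi> f = g'"
proof -
  have OPC: "f \<in> OPC" "g' \<in> OPC"
    using assms iso_Pop[of "[f, g]" 2] by (auto simp: Pop_2)
  have "\<phi> 1 (opcomp [f, g] [[idI], []]) = opcomp (\<phi> 2 [f, g]) [\<phi> 0 [], \<phi> 1 [idI]]"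
    using assms(1) iso_comp[of "[f, g]" "[[idI], []]"] idI_OPC Pop_1[of idI] Pop_0
    by (simp add: numeral_2_eq_2)
  then have "\<phi> 1 [cmpI f idI] = [cmpI g' (iso_unary \<phi> idI)]"
    using assms(2) iso_arity_0 iso_arity_1[OF idI_OPC] by (simp add: opcomp_def)
  moreover have "iso_unary \<phi> idI = idI"
    using iso by (simp add: iso_to_reverse_def iso_unary_def)
  ultimately show ?thesis
    using OPC iso_arity_1 by (simp add: cmpI_idI_right)
qed

end

theorem mainTheorem4:
  shows "\<not> (\<exists>\<phi>. iso_to_reverse \<phi>)"
proof
  assume "\<exists>\<phi>. iso_to_reverse \<phi>"
  then obtain \<phi> where iso: "iso_to_reverse \<phi>" ..
  obtain c where c: "c \<in> I01" "iso_unary \<phi> (constI c) = constI 0"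
    using iso_unary_constI_zero[OF iso] by blast
  define d where "d = (c + 1) / 2"
  have "d \<in> I01" "c < d"
    using c(1) by (auto simp: I01_def d_def)
  then have pair: "[constI c, constI d] \<in> Pop 2"
    using c(1) constI_pair_Pop_2 by blast
  obtain f' g' where image: "\<phi> 2 [constI c, constI d] = [f', g']" "[f', g'] \<in> Pop 2"
    using Pop_2_cases[OF iso_Pop[OF iso pair]] by blast
  have "g' = constI 0"
    using iso_arity_2_swaps[OF iso pair image(1)] c(2) by simp
  with Pop_2_last_pos[OF image(2)] show False
    by (simp add: constI_def)
qed

end
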